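(* Let $n\ge1$ be an integer and $p>2$. Let $w$ be the fundamental solution of the $p$-Laplace equation in $\mathbb{R}^n$, i.e. \[w(x)=-c_{n,p}\tfrac{p-1}{p-n}|x|^{\frac{p-n}{p-1}}\ \text{ if } p\neq n,\qquad w(x)=-c_{n,n}\ln|x|\ \text{ if } p=n,\] with a constant $c_{n,p}>0$, and let $V(x):=\sum_{i=1}^N a_i w(x-y_i)$ with $N\ge1$, $a_i>0$, $y_i\in\mathbb{R}^n$. Then for every concave function $K\in C^2(\mathbb{R}^n)$, \[\Delta_p\big(V(x)+K(x)\big)\le 0\] at every point $x\in\mathbb{R}^n\setminus\{y_1,\dots,y_N\}$ where $\nabla V(x)+\nabla K(x)\neq0$ (i.e. wherever the left-hand side is defined).
   Context: For a function $u$ that is $C^2$ near $x$ with $\nabla u(x)\neq0$, the $p$-Laplacian is $\Delta_p u=|\nabla u|^{p-2}\Big((p-2)\frac{\nabla u\,(\mathcal{H}u)\,\nabla u^T}{|\nabla u|^2}+\Delta u\Big)$, where $\mathcal{H}u$ is the Hessian matrix of $u$. *)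

theory Defs
  imports "HOL-Analysis.Analysis"
begin

definition grad :: "(real^'n \<Rightarrow> real) \<Rightarrow> real^'n \<Rightarrow> real^'n" where
  "grad f x = (\<chi> i. frechet_derivative f (at x) (axis i 1))"

definition hess :: "(real^'n \<Rightarrow> real) \<Rightarrow> real^'n \<Rightarrow> real^'n^'n" where
  "hess f x = (\<chi> i j. frechet_derivative (\<lambda>y. grad f y $ i) (at x) (axis j 1))"

definition C2 :: "(real^'n \<Rightarrow> real) \<Rightarrow> bool" where
  "C2 f \<longleftrightarrow> (\<forall>x. f differentiable (at x)) \<and>
            (\<forall>x i. (\<lambda>y. grad f y $ i) differentiable (at x)) \<and>
            continuous_on UNIV (hess f)"

definition p_laplacian :: "real \<Rightarrow> (real^'n \<Rightarrow> real) \<Rightarrow> real^'n \<Rightarrow> real" where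
  "p_laplacian p u x =
     norm (grad u x) powr (p - 2) *
       ((p - 2) * (grad u x \<bullet> (hess u x *v grad u x)) / (norm (grad u x))\<^sup>2
        + trace (hess u x))"

definition fund_sol :: "real \<Rightarrow> real \<Rightarrow> real^'n \<Rightarrow> real" where
  "fund_sol c p x =
     (if p \<noteq> real CARD('n)
      then - c * (p - 1) / (p - real CARD('n)) * norm x powr ((p - real CARD('n)) / (p - 1))
      else - c * ln (norm x))"

end

theory Submission
  imports Defs
begin

text \<open>
  Where the gradient g does not vanish, the sign of the p-Laplacian is that of the normalized
  p-Laplacian (p - 2) g.Hg / |g|^2 + tr H, which is linear in the Hessian H.  So it suffices to
  bound the contribution of each summand.  For concave K, H is negative semidefinite and both
  parts are nonpositive.  For the fundamental solution, grad w(v) = -c |v|^(-b) v with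
  b = (n + p - 2)/(p - 1), and its normalized p-Laplacian is
  -c |v|^(-b) ((p - 2)(1 - b cos^2 t) + n - b), t the angle between v and g; by Cauchy-Schwarz
  this is at most -c |v|^(-b) (n + p - 2 - b (p - 1)) = 0.
\<close>

lemma grad_eqI:
  assumes "(f has_derivative (\<lambda>h. G \<bullet> h)) (at z)"
  shows "grad f z = G"
  using frechet_derivative_at[OF assms, symmetric]
  by (simp add: grad_def inner_axis vec_eq_iff)

lemma has_derivative_grad:
  assumes "f differentiable (at z)"
  shows "(f has_derivative (\<lambda>h. grad f z \<bullet> h)) (at z)"
proof -
  have df: "(f has_derivative frechet_derivative f (at z)) (at z)"
    using assms frechet_derivative_works by blast
  interpret D: linear "frechet_derivative f (at z)"
    using has_derivative_linear[OF df] .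
  have "frechet_derivative f (at z) h = grad f z \<bullet> h" for h
  proof -
    have "frechet_derivative f (at z) h = frechet_derivative f (at z) (\<Sum>j\<in>UNIV. h $ j *\<^sub>R axis j 1)"
      by (simp add: basis_expansion flip: scalar_mult_eq_scaleR)
    also have "\<dots> = grad f z \<bullet> h"
      by (simp add: D.sum D.scale grad_def inner_vec_def mult.commute)
    finally show ?thesis .
  qed
  then have "frechet_derivative f (at z) = (\<lambda>h. grad f z \<bullet> h)" ..
  with df show ?thesis
    by simp
qed

lemma hess_eq_matrix:
  assumes "open S" "x \<in> S" "\<And>z. z \<in> S \<Longrightarrow> grad f z = G z"
    and "(G has_derivative D) (at x)"
  shows "hess f x = matrix D"
proof -
  have "((\<lambda>z. grad f z $ i) has_derivative (\<lambda>h. D h $ i)) (at x)" for i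
    using has_derivative_transform_within_open[OF
        bounded_linear.has_derivative[OF bounded_linear_vec_nth assms(4)] assms(1,2)] assms(3)
    by simp
  then have "frechet_derivative (\<lambda>z. grad f z $ i) (at x) = (\<lambda>h. D h $ i)" for i
    by (metis frechet_derivative_at)
  then show ?thesis
    by (simp add: hess_def matrix_def)
qed

lemma C2_has_derivative_grad:
  assumes "C2 f"
  shows "(grad f has_derivative (\<lambda>h. hess f x *v h)) (at x)"
proof -
  have "((\<lambda>z. grad f z $ i) has_derivative (\<lambda>h. (hess f x *v h) $ i)) (at x)" for i
  proof -
    have "hess f x $ i = grad (\<lambda>z. grad f z $ i) x"
      by (simp add: hess_def grad_def)
    then show ?thesis
      using has_derivative_grad[of "\<lambda>z. grad f z $ i" x] assms
      by (simp add: C2_def matrix_vector_mult_def inner_vec_def mult.commute)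
  qed
  then show ?thesis
    by (simp add: has_derivative_componentwise_within[of "grad f"] Basis_vec_def inner_axis)
qed

definition normalized_p_laplacian :: "real \<Rightarrow> real^'n \<Rightarrow> (real^'n \<Rightarrow> real^'n) \<Rightarrow> real" where
  "normalized_p_laplacian p g D =
     (p - 2) * (g \<bullet> D g) / (norm g)\<^sup>2 + (\<Sum>i\<in>UNIV. axis i 1 \<bullet> D (axis i 1))"

lemma p_laplacian_eq_normalized:
  assumes "open S" "x \<in> S" "\<And>z. z \<in> S \<Longrightarrow> grad f z = G z"
    and "(G has_derivative D) (at x)"
  shows "p_laplacian p f x = norm (G x) powr (p - 2) * normalized_p_laplacian p (G x) D"
proof -
  have "linear D"
    using assms(4) has_derivative_linear by blast
  then have "matrix D *v v = D v" for v
    by (simp add: matrix_works linear_matrix_vector_mul_eq)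
  moreover have "trace (matrix D) = (\<Sum>i\<in>UNIV. axis i 1 \<bullet> D (axis i 1))"
    by (simp add: trace_def matrix_def inner_axis')
  ultimately show ?thesis
    using hess_eq_matrix[OF assms] assms(2,3)
    by (simp add: p_laplacian_def normalized_p_laplacian_def)
qed

lemma normalized_p_laplacian_lincomb:
  assumes "finite A"
  shows "normalized_p_laplacian p g (\<lambda>h. (\<Sum>k\<in>A. a k *\<^sub>R D k h) + E h)
       = (\<Sum>k\<in>A. a k * normalized_p_laplacian p g (D k)) + normalized_p_laplacian p g E"
proof -
  have "(p - 2) * (g \<bullet> ((\<Sum>k\<in>A. a k *\<^sub>R D k g) + E g)) / (norm g)\<^sup>2
      = (\<Sum>k\<in>A. a k * ((p - 2) * (g \<bullet> D k g) / (norm g)\<^sup>2)) + (p - 2) * (g \<bullet> E g) / (norm g)\<^sup>2"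
    by (simp add: inner_sum_right inner_add_right sum_distrib_left sum_divide_distrib
        distrib_left add_divide_distrib mult.left_commute)
  moreover have "(\<Sum>i\<in>UNIV. axis i 1 \<bullet> ((\<Sum>k\<in>A. a k *\<^sub>R D k (axis i 1)) + E (axis i 1)))
      = (\<Sum>k\<in>A. a k * (\<Sum>i\<in>UNIV. axis i 1 \<bullet> D k (axis i 1))) + (\<Sum>i\<in>UNIV. axis i 1 \<bullet> E (axis i 1))"
    by (simp add: inner_sum_right inner_add_right sum.distrib sum_distrib_left sum.swap[of _ A])
  ultimately show ?thesis
    by (simp add: normalized_p_laplacian_def sum.distrib distrib_left)
qed

lemma normalized_p_laplacian_nonpos:
  assumes "p \<ge> 2" and "\<And>v. v \<bullet> D v \<le> 0"
  shows "normalized_p_laplacian p g D \<le> 0"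
  using assms unfolding normalized_p_laplacian_def
  by (intro add_nonpos_nonpos sum_nonpos divide_nonpos_nonneg mult_nonneg_nonpos) auto

lemma concave_on_line:
  fixes K :: "'a::real_vector \<Rightarrow> real"
  assumes "concave_on UNIV K"
  shows "concave_on UNIV (\<lambda>t. K (a + t *\<^sub>R d))"
proof (rule concave_on_linorderI)
  fix t x y :: real
  assume "t > 0" "t < 1"
  have "a + ((1 - t) *\<^sub>R x + t *\<^sub>R y) *\<^sub>R d = (1 - t) *\<^sub>R (a + x *\<^sub>R d) + t *\<^sub>R (a + y *\<^sub>R d)"
    by (simp add: algebra_simps)
  then show "(1 - t) * K (a + x *\<^sub>R d) + t * K (a + y *\<^sub>R d) \<le> K (a + ((1 - t) *\<^sub>R x + t *\<^sub>R y) *\<^sub>R d)"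
    using concave_onD[OF assms, of t] \<open>t > 0\<close> \<open>t < 1\<close> by simp
qed simp

lemma has_derivative_along_line:
  assumes "(f has_derivative D) (at a)"
  shows "((\<lambda>t. f (a + t *\<^sub>R d)) has_derivative (\<lambda>t. t *\<^sub>R D d)) (at 0)"
proof -
  have "((\<lambda>t. a + t *\<^sub>R d) has_derivative (\<lambda>t. t *\<^sub>R d)) (at 0)"
    by (auto intro!: derivative_eq_intros)
  from has_derivative_compose[OF this, of f D] show ?thesis
    using assms linear_scale[OF has_derivative_linear[OF assms]] by simp
qed

lemma concave_on_le_tangent:
  fixes K :: "'a::real_normed_vector \<Rightarrow> real"
  assumes "concave_on UNIV K" and "(K has_derivative D) (at a)"
  shows "K b \<le> K a + D (b - a)"
proof -
  define psi where "psi t = - K (a + t *\<^sub>R (b - a))" for t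
  have "convex_on UNIV psi"
    using concave_on_line[OF assms(1)] unfolding concave_on_def psi_def .
  moreover have "(psi has_real_derivative - D (b - a)) (at 0)"
    using has_derivative_minus[OF has_derivative_along_line[OF assms(2), of "b - a"]]
    unfolding has_field_derivative_def psi_def by (rule has_derivative_eq_rhs) auto
  ultimately have "- D (b - a) * (1 - 0) \<le> psi 1 - psi 0"
    by (intro convex_on_imp_above_tangent[of UNIV]) auto
  then show ?thesis
    by (simp add: psi_def)
qed

lemma concave_on_gradient_monotone:
  fixes K :: "'a::real_inner \<Rightarrow> real"
  assumes "concave_on UNIV K" and "\<And>z. (K has_derivative (\<lambda>h. G z \<bullet> h)) (at z)"
  shows "(G a - G b) \<bullet> (a - b) \<le> 0"
  using concave_on_le_tangent[OF assms(1) assms(2)[of a], of b]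
    concave_on_le_tangent[OF assms(1) assms(2)[of b], of a]
  by (simp add: inner_diff_left inner_diff_right inner_commute)

lemma concave_on_hessian_nonpos:
  fixes K :: "'a::real_inner \<Rightarrow> real"
  assumes "concave_on UNIV K" and "\<And>z. (K has_derivative (\<lambda>h. G z \<bullet> h)) (at z)"
    and "(G has_derivative D) (at x)"
  shows "v \<bullet> D v \<le> 0"
proof (rule ccontr)
  define phi where "phi t = v \<bullet> G (x + t *\<^sub>R v)" for t :: real
  assume "\<not> v \<bullet> D v \<le> 0"
  moreover have "(phi has_real_derivative v \<bullet> D v) (at 0)"
    using has_derivative_inner_right[OF has_derivative_along_line[OF assms(3), of v], of v]
    unfolding phi_def has_field_derivative_def by (simp add: mult_commute_abs)
  ultimately obtain d where "d > 0" and "phi 0 < phi (d / 2)"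
    using DERIV_pos_inc_right[of phi "v \<bullet> D v" 0] by force
  moreover have "phi (d / 2) \<le> phi 0" if "d > 0"
    using concave_on_gradient_monotone[OF assms(1,2), of "x + (d / 2) *\<^sub>R v" x] that
    by (simp add: phi_def mult_le_0_iff inner_diff_left inner_diff_right inner_commute)
  ultimately show False
    by simp
qed

lemma has_derivative_norm_powr:
  fixes z :: "'a::real_inner"
  assumes "z \<noteq> 0"
  shows "((\<lambda>u. norm u powr r) has_derivative (\<lambda>h. r * norm z powr (r - 2) * (z \<bullet> h))) (at z)"
proof -
  have "norm z powr (r - 2) = norm z powr r / (norm z * norm z)"
    using assms by (simp add: powr_diff power2_eq_square)
  then show ?thesis
    using has_derivative_powr[OF has_derivative_norm[OF assms] has_derivative_const[of r]] assms
    by (auto simp: sgn_div_norm inner_commute field_simps elim!: has_derivative_eq_rhs)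
qed

definition radial_power :: "real \<Rightarrow> 'a::real_normed_vector \<Rightarrow> 'a" where
  "radial_power b v = norm v powr (- b) *\<^sub>R v"

definition radial_power_derivative :: "real \<Rightarrow> 'a::real_inner \<Rightarrow> 'a \<Rightarrow> 'a" where
  "radial_power_derivative b v h =
     norm v powr (- b) *\<^sub>R h - (b * norm v powr (- b - 2) * (v \<bullet> h)) *\<^sub>R v"

lemma has_derivative_radial_power:
  fixes z :: "'a::real_inner"
  assumes "z \<noteq> 0"
  shows "(radial_power b has_derivative radial_power_derivative b z) (at z)"
  using has_derivative_scaleR[OF has_derivative_norm_powr[OF assms, of "- b"] has_derivative_ident]
  unfolding radial_power_def[abs_def] radial_power_derivative_def[abs_def]
  by (rule has_derivative_eq_rhs) (simp add: fun_eq_iff algebra_simps)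

lemma has_derivative_translate:
  assumes "(f has_derivative D) (at (z - y))"
  shows "((\<lambda>u. f (u - y)) has_derivative D) (at z)"
  using has_derivative_compose[OF has_derivative_diff[OF has_derivative_ident has_derivative_const]
      assms]
  by simp

lemma has_derivative_fund_sol:
  fixes z :: "real^'n"
  assumes "p > 1" and "b * (p - 1) = real CARD('n) + p - 2" and "z \<noteq> 0"
  shows "(fund_sol c p has_derivative (\<lambda>h. (- c) *\<^sub>R radial_power b z \<bullet> h)) (at z)"
proof (cases "p = real CARD('n)")
  case True
  then have "(b - 2) * (p - 1) = 0"
    using assms(2) by (simp add: algebra_simps)
  then have "b = 2"
    using assms(1) by simp
  moreover have "fund_sol c p = (\<lambda>u::real^'n. - c * ln (norm u))"
    using True by (simp add: fun_eq_iff fund_sol_def)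
  moreover have "norm z powr (- 2) = inverse (norm z * norm z)"
    using assms(3) by (simp add: powr_minus power2_eq_square)
  ultimately show ?thesis
    using has_derivative_mult_right[OF has_derivative_ln[OF _ has_derivative_norm[OF assms(3)]],
        of "- c"] assms(3)
    by (auto simp: radial_power_def sgn_div_norm inner_commute field_simps elim!: has_derivative_eq_rhs)
next
  case False
  define e where "e = (p - real CARD('n)) / (p - 1)"
  define k where "k = - c * (p - 1) / (p - real CARD('n))"
  have "p - 1 \<noteq> 0" "p - real CARD('n) \<noteq> 0"
    using False assms(1) by auto
  then have "e - 2 = - b" and "k * e = - c"
    using assms(2) by (simp_all add: e_def k_def divide_simps)
  moreover have "fund_sol c p = (\<lambda>u::real^'n. k * norm u powr e)"
    using False by (simp add: fun_eq_iff fund_sol_def e_def k_def)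
  ultimately show ?thesis
    using has_derivative_mult_right[OF has_derivative_norm_powr[OF assms(3), of e], of k]
    by (auto simp: radial_power_def mult.assoc[symmetric] elim!: has_derivative_eq_rhs)
qed

lemma has_derivative_fund_sol_potential:
  fixes y :: "'i \<Rightarrow> real^'n"
  assumes "p > 1" and "b * (p - 1) = real CARD('n) + p - 2" and "z \<notin> y ` A"
  shows "((\<lambda>u. \<Sum>i\<in>A. a i * fund_sol c p (u - y i)) has_derivative
          (\<lambda>h. (\<Sum>i\<in>A. (- c * a i) *\<^sub>R radial_power b (z - y i)) \<bullet> h)) (at z)"
proof -
  have "((\<lambda>u. fund_sol c p (u - y i)) has_derivative
          (\<lambda>h. (- c) *\<^sub>R radial_power b (z - y i) \<bullet> h)) (at z)" if "i \<in> A" for i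
    using assms that by (intro has_derivative_translate has_derivative_fund_sol) auto
  then show ?thesis
    by (auto intro!: derivative_eq_intros simp: inner_sum_left mult.assoc mult.left_commute)
qed

lemma normalized_p_laplacian_radial_power_nonneg:
  fixes v g :: "real^'n"
  assumes "p \<ge> 2" and "b * (p - 1) = real CARD('n) + p - 2" and "v \<noteq> 0" and "g \<noteq> 0"
  shows "normalized_p_laplacian p g (radial_power_derivative b v) \<ge> 0"
proof -
  define s where "s = norm v powr (- b)"
  define r where "r = norm v powr (- b - 2)"
  have "r \<ge> 0"
    by (simp add: r_def)
  have r_norm: "r * (norm v)\<^sup>2 = s"
    using assms(3) by (simp add: r_def s_def powr_diff power2_eq_square)
  have "b \<ge> 0"
    using assms(1,2) by (smt (verit) of_nat_0_le_iff zero_le_mult_iff)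
  have "(\<Sum>i\<in>UNIV. axis i 1 \<bullet> (s *\<^sub>R axis i 1 - (b * r * (v \<bullet> axis i 1)) *\<^sub>R v))
      = (\<Sum>i\<in>UNIV. s - b * r * (v $ i * v $ i))"
    by (simp add: inner_axis inner_axis' inner_diff_right mult.assoc)
  also have "\<dots> = s * real CARD('n) - b * s"
    by (simp add: sum_subtractf mult.assoc power2_norm_eq_inner inner_vec_def
        flip: sum_distrib_left r_norm)
  finally have trace_part:
    "(\<Sum>i\<in>UNIV. axis i 1 \<bullet> (s *\<^sub>R axis i 1 - (b * r * (v \<bullet> axis i 1)) *\<^sub>R v))
      = s * real CARD('n) - b * s" .
  have "b * r * (v \<bullet> g)\<^sup>2 \<le> b * r * ((norm v)\<^sup>2 * (norm g)\<^sup>2)"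
    using Cauchy_Schwarz_ineq[of v g] \<open>b \<ge> 0\<close> \<open>r \<ge> 0\<close>
    by (intro mult_left_mono) (auto simp: power2_norm_eq_inner)
  then have "s * (norm g)\<^sup>2 - b * r * (v \<bullet> g)\<^sup>2 \<ge> (s - b * s) * (norm g)\<^sup>2"
    by (simp add: algebra_simps flip: r_norm)
  then have quad_bound:
    "(p - 2) * (s * (norm g)\<^sup>2 - b * r * (v \<bullet> g)\<^sup>2) / (norm g)\<^sup>2 \<ge> (p - 2) * (s - b * s)"
    using assms(1,4) by (simp add: le_divide_eq mult_left_mono mult.assoc)
  have quad_part:
    "g \<bullet> (s *\<^sub>R g - (b * r * (v \<bullet> g)) *\<^sub>R v) = s * (norm g)\<^sup>2 - b * r * (v \<bullet> g)\<^sup>2"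
    by (simp add: inner_diff_right power2_eq_square inner_commute flip: power2_norm_eq_inner)
  have "normalized_p_laplacian p g (\<lambda>h. s *\<^sub>R h - (b * r * (v \<bullet> h)) *\<^sub>R v)
      \<ge> s * (real CARD('n) + p - 2 - b * (p - 1))"
    unfolding normalized_p_laplacian_def quad_part trace_part
    using quad_bound by (simp add: algebra_simps)
  then show ?thesis
    by (simp add: assms(2) s_def r_def radial_power_derivative_def[abs_def])
qed

theorem lemma4p1:
  fixes p c :: real and N :: nat and a :: "nat \<Rightarrow> real"
    and y :: "nat \<Rightarrow> real^'n" and K :: "real^'n \<Rightarrow> real" and x :: "real^'n"
  assumes "p > 2" and "c > 0" and "N \<ge> 1"
    and "\<forall>i<N. a i > 0"
    and "C2 K" and "concave_on UNIV K"
    and "x \<notin> y ` {..<N}"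
    and "grad (\<lambda>z. (\<Sum>i<N. a i * fund_sol c p (z - y i)) + K z) x \<noteq> 0"
  shows "p_laplacian p (\<lambda>z. (\<Sum>i<N. a i * fund_sol c p (z - y i)) + K z) x \<le> 0"
proof -
  define b where "b = (real CARD('n) + p - 2) / (p - 1)"
  define G where "G z = (\<Sum>i<N. (- c * a i) *\<^sub>R radial_power b (z - y i)) + grad K z" for z
  define S where "S = - y ` {..<N}"
  have b: "b * (p - 1) = real CARD('n) + p - 2"
    using assms(1) by (simp add: b_def)
  have S: "open S" "x \<in> S"
    using assms(7) by (auto simp: S_def intro!: finite_imp_closed)
  have dK: "(K has_derivative (\<lambda>h. grad K z \<bullet> h)) (at z)" for z
    using assms(5) by (simp add: C2_def has_derivative_grad)
  have grad_u: "grad (\<lambda>z. (\<Sum>i<N. a i * fund_sol c p (z - y i)) + K z) z = G z" if "z \<in> S" for z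
    using has_derivative_add[OF has_derivative_fund_sol_potential[OF _ b] dK] assms(1) that
    by (intro grad_eqI) (auto simp: G_def S_def inner_add_left)
  have "(G has_derivative (\<lambda>h. (\<Sum>i<N. (- c * a i) *\<^sub>R radial_power_derivative b (x - y i) h)
      + hess K x *v h)) (at x)"
    unfolding G_def using S(2)
    by (intro has_derivative_add has_derivative_sum has_derivative_scaleR_right
        has_derivative_translate has_derivative_radial_power C2_has_derivative_grad[OF assms(5)])
      (auto simp: S_def)
  then have "p_laplacian p (\<lambda>z. (\<Sum>i<N. a i * fund_sol c p (z - y i)) + K z) x
      = norm (G x) powr (p - 2) *
        ((\<Sum>i<N. (- c * a i) * normalized_p_laplacian p (G x) (radial_power_derivative b (x - y i)))
          + normalized_p_laplacian p (G x) (\<lambda>h. hess K x *v h))"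
    by (simp only: p_laplacian_eq_normalized[OF S grad_u]
        normalized_p_laplacian_lincomb[OF finite_lessThan])
  also have "\<dots> \<le> 0"
  proof -
    have "normalized_p_laplacian p (G x) (radial_power_derivative b (x - y i)) \<ge> 0" if "i < N" for i
      using that S(2) assms(1,8) b grad_u[OF S(2)]
      by (intro normalized_p_laplacian_radial_power_nonneg) (auto simp: S_def)
    moreover have "normalized_p_laplacian p (G x) (\<lambda>h. hess K x *v h) \<le> 0"
      using assms(1) concave_on_hessian_nonpos[OF assms(6) dK C2_has_derivative_grad[OF assms(5)]]
      by (intro normalized_p_laplacian_nonpos) auto
    ultimately show ?thesis
      using assms(2,4)
      by (intro mult_nonneg_nonpos add_nonpos_nonpos sum_nonpos mult_nonpos_nonneg) auto
  qed
  finally show ?thesis .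
qed

end
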